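(* For every integer $m \ge 2$, the imbalanced $(m,3)$-RPS game is strongly playable: in every (mixed-strategy) Nash equilibrium of this game, each of the three objects $R$, $P$, $S$ is played with positive probability by at least one player.
   Context: An $(m,n)$-RPS game is a symmetric, zero-sum, win/lose game with $m$ players and $n$ pure strategies ("objects"), played without collusion, in which each player independently chooses an object. The rules assign to every multiset $c$ of $m$ chosen objects a single winning object $\phi(c) \in c$; every player who chose $\phi(c)$ wins and every other player loses. If there are $m'$ winners, each winner receives payoff $\frac{m-m'}{m'}$ and each loser receives payoff $-1$. Players use mixed strategies (independent probability distributions over the objects), and Nash equilibria are taken in mixed strategies. The imbalanced $(m,3)$-RPS has objects $R,P,S$ with the following rules: any multiset containing at least one $S$ and at least one $R$ is won by $R$; any multiset containing only $R$'s and $P$'s (with at least one $P$ and at least one $R$) is won by $P$; any multiset containing only $P$'s and $S$'s (with at least one of each) is won by $S$; a multiset consisting of a single object type is won by that object. A game is strongly playable if in every Nash equilibrium every object is played with positive probability by at least one player. *)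

theory Defs
  imports Complex_Main "HOL-Library.FuncSet"
begin

datatype obj = R | P | S

text \<open>Winning object of the set of object types present in a play (the rules depend on the
multiset of choices only through which object types occur).\<close>
definition rps_winner :: "obj set \<Rightarrow> obj" where
  "rps_winner A =
     (if R \<in> A \<and> S \<in> A then R
      else if A \<subseteq> {R, P} \<and> R \<in> A \<and> P \<in> A then P
      else if A \<subseteq> {P, S} \<and> P \<in> A \<and> S \<in> A then S
      else (THE x. A = {x}))"

definition winner :: "nat \<Rightarrow> (nat \<Rightarrow> obj) \<Rightarrow> obj" where
  "winner m c = rps_winner (c ` {..<m})"

definition num_winners :: "nat \<Rightarrow> (nat \<Rightarrow> obj) \<Rightarrow> nat" where
  "num_winners m c = card {j \<in> {..<m}. c j = winner m c}"

definition pure_payoff :: "nat \<Rightarrow> (nat \<Rightarrow> obj) \<Rightarrow> nat \<Rightarrow> real" where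
  "pure_payoff m c i =
     (if c i = winner m c
      then (real m - real (num_winners m c)) / real (num_winners m c)
      else -1)"

definition mixed_strategy :: "(obj \<Rightarrow> real) \<Rightarrow> bool" where
  "mixed_strategy p \<longleftrightarrow> (\<forall>x. p x \<ge> 0) \<and> p R + p P + p S = 1"

definition exp_payoff :: "nat \<Rightarrow> (nat \<Rightarrow> obj \<Rightarrow> real) \<Rightarrow> nat \<Rightarrow> real" where
  "exp_payoff m \<sigma> i =
     (\<Sum>c \<in> PiE {..<m} (\<lambda>_. UNIV). (\<Prod>j<m. \<sigma> j (c j)) * pure_payoff m c i)"

definition nash_eq :: "nat \<Rightarrow> (nat \<Rightarrow> obj \<Rightarrow> real) \<Rightarrow> bool" where
  "nash_eq m \<sigma> \<longleftrightarrow>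
     (\<forall>j<m. mixed_strategy (\<sigma> j)) \<and>
     (\<forall>i<m. \<forall>\<tau>. mixed_strategy \<tau> \<longrightarrow> exp_payoff m (\<sigma>(i := \<tau>)) i \<le> exp_payoff m \<sigma> i)"

definition strongly_playable :: "nat \<Rightarrow> bool" where
  "strongly_playable m \<longleftrightarrow>
     (\<forall>\<sigma>. nash_eq m \<sigma> \<longrightarrow> (\<forall>x. \<exists>i<m. \<sigma> i x > 0))"

end

theory Submission
  imports Defs
begin

text \<open>Suppose that in a Nash equilibrium nobody plays the object x, and let d be the object that
wins every play without x. Deviating to d guarantees a player a nonnegative payoff, so, the game
being zero-sum, every equilibrium payoff is 0. If some other player put positive weight on an
object other than d, a deviation to d would beat that player with positive probability and pay
strictly more than 0; hence (as m \<ge> 2) every player plays d purely. But against d a single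
player deviating to x is the unique winner, a contradiction.\<close>

lemma UNIV_obj: "UNIV = {R, P, S}"
  using obj.exhaust by auto

instance obj :: finite
  by standard (simp add: UNIV_obj)

lemma obj_set_cases:
  obtains "A = {}" | "A = {R}" | "A = {P}" | "A = {S}" | "A = {R, P}" | "A = {R, S}"
    | "A = {P, S}" | "A = {R, P, S}"
proof -
  have "A \<in> Pow {R, P, S}"
    by (simp flip: UNIV_obj)
  then show thesis
    using that by (simp add: Pow_insert) blast
qed

lemma rps_winner_in: "A \<noteq> {} \<Longrightarrow> rps_winner A \<in> A"
  by (cases A rule: obj_set_cases) (auto simp: rps_winner_def)

definition dominant_without :: "obj \<Rightarrow> obj" where
  "dominant_without x = (case x of R \<Rightarrow> S | P \<Rightarrow> R | S \<Rightarrow> P)"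

lemma dominant_without_neq: "dominant_without x \<noteq> x"
  by (cases x) (auto simp: dominant_without_def)

lemma rps_winner_without:
  assumes "x \<notin> A" and "dominant_without x \<in> A"
  shows "rps_winner A = dominant_without x"
  using assms
  by (cases A rule: obj_set_cases; cases x) (auto simp: rps_winner_def dominant_without_def)

lemma rps_winner_pair: "rps_winner {x, dominant_without x} = x"
  by (cases x) (auto simp: rps_winner_def dominant_without_def)

lemma winner_played: "0 < m \<Longrightarrow> winner m c \<in> c ` {..<m}"
  unfolding winner_def by (rule rps_winner_in) auto

lemma num_winners_le: "num_winners m c \<le> m"
  unfolding num_winners_def
  using card_mono[OF finite_lessThan, of "{j \<in> {..<m}. c j = winner m c}" m] by auto

lemma num_winners_pos:
  assumes "0 < m"
  shows "0 < num_winners m c"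
proof -
  obtain j where "j < m" "c j = winner m c"
    using winner_played[OF assms, of c] by force
  then show ?thesis
    unfolding num_winners_def by (auto simp: card_gt_0_iff)
qed

lemma pure_payoff_winner_nonneg: "c i = winner m c \<Longrightarrow> 0 \<le> pure_payoff m c i"
  unfolding pure_payoff_def using num_winners_le[of m c] by simp

lemma pure_payoff_winner_pos:
  assumes "c i = winner m c" and "j < m" and "c j \<noteq> winner m c"
  shows "0 < pure_payoff m c i"
proof -
  have "num_winners m c \<le> card ({..<m} - {j})"
    unfolding num_winners_def using assms by (intro card_mono) auto
  also have "\<dots> < m"
    using \<open>j < m\<close> by simp
  finally have "num_winners m c < m" .
  then show ?thesis
    unfolding pure_payoff_def using assms num_winners_pos[of m c] by simp
qed

lemma pure_payoff_restrict:
  "i < m \<Longrightarrow> pure_payoff m (restrict c {..<m}) i = pure_payoff m c i"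
  unfolding pure_payoff_def num_winners_def winner_def
  by (simp cong: conj_cong)

lemma sum_pure_payoff:
  assumes "0 < m"
  shows "(\<Sum>i<m. pure_payoff m c i) = 0"
proof -
  define W where "W = {i \<in> {..<m}. c i = winner m c}"
  let ?w = "num_winners m c"
  have card_W: "card W = ?w"
    unfolding num_winners_def W_def ..
  have card_losers: "card ({..<m} - W) = m - ?w"
    using card_W by (subst card_Diff_subset) (auto simp: W_def)
  have "{..<m} \<inter> {i. c i = winner m c} = W" and "{..<m} \<inter> - {i. c i = winner m c} = {..<m} - W"
    unfolding W_def by auto
  then have "(\<Sum>i<m. pure_payoff m c i)
      = real (card W) * ((real m - real ?w) / real ?w) - real (card ({..<m} - W))"
    unfolding pure_payoff_def by (simp add: sum.If_cases)
  also have "\<dots> = 0"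
    using num_winners_pos[OF assms, of c] num_winners_le[of m c]
    by (simp add: card_W card_losers of_nat_diff)
  finally show ?thesis .
qed

lemma sum_exp_payoff:
  assumes "0 < m"
  shows "(\<Sum>i<m. exp_payoff m \<sigma> i) = 0"
proof -
  have "(\<Sum>i<m. exp_payoff m \<sigma> i) =
    (\<Sum>c \<in> PiE {..<m} (\<lambda>_. UNIV). (\<Prod>j<m. \<sigma> j (c j)) * (\<Sum>i<m. pure_payoff m c i))"
    unfolding exp_payoff_def by (subst sum.swap) (simp add: sum_distrib_left)
  also have "\<dots> = 0"
    using sum_pure_payoff[OF assms] by simp
  finally show ?thesis .
qed

lemma weighted_payoff_nonneg:
  assumes nonneg: "\<And>j y. j < m \<Longrightarrow> 0 \<le> \<sigma> j y"
    and supported: "\<And>c. (\<And>j. j < m \<Longrightarrow> 0 < \<sigma> j (c j)) \<Longrightarrow> 0 \<le> pure_payoff m c i"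
  shows "0 \<le> (\<Prod>j<m. \<sigma> j (c j)) * pure_payoff m c i"
proof (cases "\<forall>j<m. 0 < \<sigma> j (c j)")
  case True
  then show ?thesis
    using supported nonneg by (intro mult_nonneg_nonneg prod_nonneg) auto
next
  case False
  then obtain j where "j < m" "\<sigma> j (c j) = 0"
    using nonneg by (meson order.not_eq_order_implies_strict not_less)
  then have "(\<Prod>j<m. \<sigma> j (c j)) = 0"
    by (auto simp: prod_zero_iff)
  then show ?thesis
    by (simp del: prod_zero_iff)
qed

lemma exp_payoff_nonneg:
  assumes "\<And>j y. j < m \<Longrightarrow> 0 \<le> \<sigma> j y"
    and "\<And>c. (\<And>j. j < m \<Longrightarrow> 0 < \<sigma> j (c j)) \<Longrightarrow> 0 \<le> pure_payoff m c i"
  shows "0 \<le> exp_payoff m \<sigma> i"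
  unfolding exp_payoff_def by (rule sum_nonneg, rule weighted_payoff_nonneg[OF assms])

lemma exp_payoff_pos:
  assumes "\<And>j y. j < m \<Longrightarrow> 0 \<le> \<sigma> j y"
    and "\<And>c. (\<And>j. j < m \<Longrightarrow> 0 < \<sigma> j (c j)) \<Longrightarrow> 0 \<le> pure_payoff m c i"
    and "i < m" and "\<And>j. j < m \<Longrightarrow> 0 < \<sigma> j (c\<^sub>0 j)" and "0 < pure_payoff m c\<^sub>0 i"
  shows "0 < exp_payoff m \<sigma> i"
  unfolding exp_payoff_def
proof (rule sum_pos2)
  show "finite (PiE {..<m} (\<lambda>_. UNIV :: obj set))"
    by (simp add: finite_PiE)
  show "restrict c\<^sub>0 {..<m} \<in> PiE {..<m} (\<lambda>_. UNIV)"
    by simp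
  show "0 < (\<Prod>j<m. \<sigma> j (restrict c\<^sub>0 {..<m} j)) * pure_payoff m (restrict c\<^sub>0 {..<m}) i"
    using assms by (simp add: pure_payoff_restrict) (intro mult_pos_pos prod_pos; simp)
qed (rule weighted_payoff_nonneg[OF assms(1,2)])

definition pure_strategy :: "obj \<Rightarrow> obj \<Rightarrow> real" where
  "pure_strategy y = (\<lambda>z. if z = y then 1 else 0)"

lemma mixed_strategy_pure: "mixed_strategy (pure_strategy y)"
  by (cases y) (auto simp: mixed_strategy_def pure_strategy_def)

lemma mixed_strategy_ex_pos:
  assumes "mixed_strategy p"
  shows "\<exists>z. 0 < p z"
proof (rule ccontr)
  assume "\<nexists>z. 0 < p z"
  then have "p R = 0" and "p P = 0" and "p S = 0"
    using assms by (auto simp: mixed_strategy_def not_less intro: order.antisym)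
  then show False
    using assms by (simp add: mixed_strategy_def)
qed

lemma mixed_strategy_eq_pure:
  assumes "mixed_strategy p" and "\<And>z. z \<noteq> y \<Longrightarrow> p z = 0"
  shows "p = pure_strategy y"
proof
  fix z
  show "p z = pure_strategy y z"
    using assms by (cases y; cases z) (auto simp: mixed_strategy_def pure_strategy_def)
qed

lemma winner_dominant_without:
  assumes "\<forall>j<m. c j \<noteq> x" and "i < m" and "c i = dominant_without x"
  shows "winner m c = dominant_without x"
  unfolding winner_def using assms by (intro rps_winner_without) force+

lemma mixed_profile_update_nonneg:
  "\<forall>j<m. mixed_strategy (\<sigma> j) \<Longrightarrow> mixed_strategy \<tau> \<Longrightarrow> j < m \<Longrightarrow> 0 \<le> (\<sigma>(i := \<tau>)) j y"
  by (simp add: mixed_strategy_def)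

lemma winner_deviate_dominant:
  assumes absent: "\<forall>j<m. \<sigma> j x = 0" and "i < m"
    and supported: "\<And>j. j < m \<Longrightarrow> 0 < (\<sigma>(i := pure_strategy (dominant_without x))) j (c j)"
  shows "c i = dominant_without x" and "winner m c = dominant_without x"
proof -
  show ci: "c i = dominant_without x"
    using supported[OF \<open>i < m\<close>] by (auto simp: pure_strategy_def split: if_splits)
  have "\<forall>j<m. c j \<noteq> x"
    using supported absent ci dominant_without_neq by (metis fun_upd_other less_irrefl)
  then show "winner m c = dominant_without x"
    using \<open>i < m\<close> ci by (rule winner_dominant_without)
qed

lemma exp_payoff_deviate_dominant_nonneg:
  assumes mixed: "\<forall>j<m. mixed_strategy (\<sigma> j)" and absent: "\<forall>j<m. \<sigma> j x = 0" and "i < m"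
  shows "0 \<le> exp_payoff m (\<sigma>(i := pure_strategy (dominant_without x))) i"
  using mixed mixed_strategy_pure winner_deviate_dominant[where \<sigma> = \<sigma>, OF absent \<open>i < m\<close>]
  by (intro exp_payoff_nonneg mixed_profile_update_nonneg pure_payoff_winner_nonneg) auto

lemma exp_payoff_deviate_dominant_pos:
  assumes mixed: "\<forall>j<m. mixed_strategy (\<sigma> j)" and absent: "\<forall>j<m. \<sigma> j x = 0" and "i < m"
    and "j < m" and "j \<noteq> i" and "0 < \<sigma> j y" and "y \<noteq> dominant_without x"
  shows "0 < exp_payoff m (\<sigma>(i := pure_strategy (dominant_without x))) i"
proof -
  let ?d = "dominant_without x"
  have "\<forall>k. \<exists>z. k < m \<longrightarrow> 0 < \<sigma> k z"
    using mixed mixed_strategy_ex_pos by blast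
  then obtain pick where pick: "\<forall>k<m. 0 < \<sigma> k (pick k)"
    by (metis choice)
  define c\<^sub>0 where "c\<^sub>0 k = (if k = i then ?d else if k = j then y else pick k)" for k
  have supported: "0 < (\<sigma>(i := pure_strategy ?d)) k (c\<^sub>0 k)" if "k < m" for k
    using assms pick that by (simp add: c\<^sub>0_def pure_strategy_def)
  note played = winner_deviate_dominant[where \<sigma> = \<sigma>, OF absent \<open>i < m\<close> supported]
  have "c\<^sub>0 j = y"
    using \<open>j \<noteq> i\<close> by (simp add: c\<^sub>0_def)
  then have "c\<^sub>0 j \<noteq> winner m c\<^sub>0"
    using played(2) \<open>y \<noteq> dominant_without x\<close> by simp
  then have "0 < pure_payoff m c\<^sub>0 i"
    using played \<open>j < m\<close> by (intro pure_payoff_winner_pos) simp_all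
  then show ?thesis
    using mixed mixed_strategy_pure supported \<open>i < m\<close>
      winner_deviate_dominant[where \<sigma> = \<sigma>, OF absent \<open>i < m\<close>]
    by (intro exp_payoff_pos mixed_profile_update_nonneg pure_payoff_winner_nonneg) auto
qed

lemma nash_eq_mixed: "nash_eq m \<sigma> \<Longrightarrow> j < m \<Longrightarrow> mixed_strategy (\<sigma> j)"
  by (simp add: nash_eq_def)

lemma nash_eq_pure_deviation:
  "nash_eq m \<sigma> \<Longrightarrow> i < m \<Longrightarrow> exp_payoff m (\<sigma>(i := pure_strategy y)) i \<le> exp_payoff m \<sigma> i"
  using mixed_strategy_pure by (simp add: nash_eq_def)

lemma nash_eq_payoff_zero:
  assumes eq: "nash_eq m \<sigma>" and "0 < m" and absent: "\<forall>j<m. \<sigma> j x = 0" and "i < m"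
  shows "exp_payoff m \<sigma> i = 0"
proof -
  have "0 \<le> exp_payoff m \<sigma> k" if "k < m" for k
  proof -
    have "0 \<le> exp_payoff m (\<sigma>(k := pure_strategy (dominant_without x))) k"
      using nash_eq_mixed[OF eq] absent that by (intro exp_payoff_deviate_dominant_nonneg) auto
    also have "\<dots> \<le> exp_payoff m \<sigma> k"
      using eq that by (rule nash_eq_pure_deviation)
    finally show ?thesis .
  qed
  then have "\<forall>k\<in>{..<m}. exp_payoff m \<sigma> k = 0"
    using sum_exp_payoff[OF \<open>0 < m\<close>, of \<sigma>] by (subst sum_nonneg_eq_0_iff[symmetric]) auto
  then show ?thesis
    using \<open>i < m\<close> by simp
qed

lemma nash_eq_plays_dominant:
  assumes eq: "nash_eq m \<sigma>" and "2 \<le> m" and absent: "\<forall>j<m. \<sigma> j x = 0" and "j < m"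
  shows "\<sigma> j = pure_strategy (dominant_without x)"
proof (rule mixed_strategy_eq_pure)
  have mixed: "\<forall>j<m. mixed_strategy (\<sigma> j)"
    using nash_eq_mixed[OF eq] by simp
  then show "mixed_strategy (\<sigma> j)"
    using \<open>j < m\<close> by simp
  fix y
  assume "y \<noteq> dominant_without x"
  define i where "i = (if j = 0 then 1 else 0 :: nat)"
  have "i < m" and "j \<noteq> i"
    using \<open>2 \<le> m\<close> \<open>j < m\<close> by (auto simp: i_def)
  show "\<sigma> j y = 0"
  proof (rule ccontr)
    assume "\<sigma> j y \<noteq> 0"
    then have "0 < \<sigma> j y"
      using mixed \<open>j < m\<close> by (simp add: mixed_strategy_def order_less_le)
    then have "0 < exp_payoff m (\<sigma>(i := pure_strategy (dominant_without x))) i"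
      using \<open>j \<noteq> i\<close> \<open>y \<noteq> dominant_without x\<close>
      by (intro exp_payoff_deviate_dominant_pos[OF mixed absent \<open>i < m\<close> \<open>j < m\<close>])
    moreover have "exp_payoff m (\<sigma>(i := pure_strategy (dominant_without x))) i \<le> exp_payoff m \<sigma> i"
      using eq \<open>i < m\<close> by (rule nash_eq_pure_deviation)
    moreover have "exp_payoff m \<sigma> i = 0"
      using eq \<open>2 \<le> m\<close> absent \<open>i < m\<close> by (intro nash_eq_payoff_zero) auto
    ultimately show False
      by linarith
  qed
qed

lemma exp_payoff_deviate_absent_pos:
  assumes "2 \<le> m" and dominant: "\<forall>j<m. \<sigma> j = pure_strategy (dominant_without x)" and "i < m"
  shows "0 < exp_payoff m (\<sigma>(i := pure_strategy x)) i"
proof -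
  let ?d = "dominant_without x"
  let ?\<tau> = "\<sigma>(i := pure_strategy x)"
  define j where "j = (if i = 0 then 1 else 0 :: nat)"
  have "j < m" and "j \<noteq> i"
    using \<open>2 \<le> m\<close> \<open>i < m\<close> by (auto simp: j_def)
  have payoff_pos: "0 < pure_payoff m c i" if supported: "\<And>k. k < m \<Longrightarrow> 0 < ?\<tau> k (c k)" for c
  proof -
    have profile: "c k = (if k = i then x else ?d)" if "k < m" for k
      using supported[OF that] dominant that by (auto simp: pure_strategy_def split: if_splits)
    have "c ` {..<m} = {x, ?d}"
      using profile \<open>i < m\<close> \<open>j < m\<close> \<open>j \<noteq> i\<close> by (auto simp: image_iff)
    then have "winner m c = x"
      by (simp add: winner_def rps_winner_pair)
    then show ?thesis
      using profile \<open>i < m\<close> \<open>j < m\<close> \<open>j \<noteq> i\<close> dominant_without_neq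
      by (intro pure_payoff_winner_pos[of c i m j]) auto
  qed
  define c\<^sub>0 where "c\<^sub>0 k = (if k = i then x else ?d)" for k
  have supported: "0 < ?\<tau> k (c\<^sub>0 k)" if "k < m" for k
    using dominant that by (simp add: c\<^sub>0_def pure_strategy_def)
  have nonneg: "0 \<le> ?\<tau> k z" if "k < m" for k z
    using dominant that by (simp add: pure_strategy_def)
  show ?thesis
  proof (rule exp_payoff_pos[of m ?\<tau> i c\<^sub>0])
    fix c
    assume "\<And>k. k < m \<Longrightarrow> 0 < ?\<tau> k (c k)"
    then show "0 \<le> pure_payoff m c i"
      by (rule payoff_pos[THEN less_imp_le])
  qed (use nonneg supported payoff_pos[OF supported] \<open>i < m\<close> in auto)
qed

theorem mainTheorem1:
  fixes m :: nat
  assumes "m \<ge> 2"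
  shows "strongly_playable m"
  unfolding strongly_playable_def
proof (intro allI impI, rule ccontr)
  fix \<sigma> x
  assume eq: "nash_eq m \<sigma>" and "\<not> (\<exists>i<m. 0 < \<sigma> i x)"
  then have absent: "\<forall>j<m. \<sigma> j x = 0"
    using nash_eq_mixed[OF eq] by (auto simp: mixed_strategy_def order_less_le)
  have "0 < m"
    using assms by simp
  have "0 < exp_payoff m (\<sigma>(0 := pure_strategy x)) 0"
    using assms nash_eq_plays_dominant[OF eq assms absent] \<open>0 < m\<close>
    by (intro exp_payoff_deviate_absent_pos) auto
  also have "\<dots> \<le> exp_payoff m \<sigma> 0"
    using eq \<open>0 < m\<close> by (rule nash_eq_pure_deviation)
  also have "\<dots> = 0"
    using nash_eq_payoff_zero[OF eq \<open>0 < m\<close> absent \<open>0 < m\<close>] .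
  finally show False
    by simp
qed

end
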